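(* Let $\mathfrak g=\mathfrak{sl}_3$, $\lambda_1,\lambda_2\in P^+$ such that $s_1(\lambda_1-\lambda_2)\in P^+$ and $s_1(\lambda_1-\lambda_2)(h_1)>0$, and let $a\in\{1,\ s_1(\lambda_1-\lambda_2)(h_1)\}$. Then for each $\nu\in P^+$ there exists an integer $\ell\ge0$ such that every $(s_{1,1},s_{1,2},s_{1,3},s_{2,2},s_{2,3})\in\mathbf T(\lambda_2)^\nu_{\lambda_1}$ satisfies $s_{1,1}\ge s_{2,2}+\ell$ and $s_{1,3}\ge a-\ell$.
   Context: $\mathfrak g=\mathfrak{sl}_3$ with simple coroots $h_1,h_2$, fundamental weights $\omega_1,\omega_2$, simple reflections $s_1,s_2$, dominant integral weights $P^+$. For $\lambda\in P^+$, $\mathbf T(\lambda)$ is the set of $(s_{1,1},s_{1,2},s_{1,3},s_{2,2},s_{2,3})\in\mathbb Z_{\ge0}^5$ with $s_{1,1}+s_{1,2}+s_{1,3}=\lambda(h_1)+\lambda(h_2)$, $s_{2,2}+s_{2,3}=\lambda(h_2)$, $s_{1,1}\ge s_{2,2}$, $s_{1,1}+s_{1,2}\ge s_{2,2}+s_{2,3}$. For $\lambda,\mu,\nu\in P^+$, $\mathbf T(\lambda)^\nu_\mu$ is the set of elements of $\mathbf T(\lambda)$ satisfying $s_{1,2}\le\mu(h_1)$, $s_{1,3}\le\mu(h_2)$, $s_{2,3}+s_{1,3}\le\mu(h_2)+s_{1,2}$, $\nu(h_1)+\nu(h_2)=\mu(h_1)+\mu(h_2)+s_{1,1}-s_{1,3}-s_{2,3}$,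 and $\nu(h_2)=\mu(h_2)+s_{1,2}+s_{2,2}-s_{1,3}-s_{2,3}$. *)

theory Defs
  imports Main
begin

text \<open>Integral weights of sl_3 are encoded by their values on the simple coroots:
  a weight w is the pair (w(h_1), w(h_2)) of integers.\<close>
type_synonym weight = "int \<times> int"

definition dominant :: "weight \<Rightarrow> bool" where
  "dominant w \<longleftrightarrow> fst w \<ge> 0 \<and> snd w \<ge> 0"

definition wminus :: "weight \<Rightarrow> weight \<Rightarrow> weight" where
  "wminus v w = (fst v - fst w, snd v - snd w)"

text \<open>Simple reflection s_1: s_1(w) = w - w(h_1) alpha_1, with alpha_1(h_1)=2, alpha_1(h_2)=-1.\<close>
definition s1 :: "weight \<Rightarrow> weight" where
  "s1 w = (- fst w, snd w + fst w)"

type_synonym tup = "int \<times> int \<times> int \<times> int \<times> int"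

definition Tset :: "weight \<Rightarrow> tup set" where
  "Tset lam = {(s11, s12, s13, s22, s23).
      s11 \<ge> 0 \<and> s12 \<ge> 0 \<and> s13 \<ge> 0 \<and> s22 \<ge> 0 \<and> s23 \<ge> 0 \<and>
      s11 + s12 + s13 = fst lam + snd lam \<and>
      s22 + s23 = snd lam \<and>
      s11 \<ge> s22 \<and> s11 + s12 \<ge> s22 + s23}"

definition Tnu :: "weight \<Rightarrow> weight \<Rightarrow> weight \<Rightarrow> tup set" where
  "Tnu lam mu nu = {(s11, s12, s13, s22, s23) \<in> Tset lam.
      s12 \<le> fst mu \<and> s13 \<le> snd mu \<and> s23 + s13 \<le> snd mu + s12 \<and>
      fst nu + snd nu = fst mu + snd mu + s11 - s13 - s23 \<and>
      snd nu = snd mu + s12 + s22 - s13 - s23}"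

end

theory Submission
  imports Defs
begin

text \<open>
  Write lam1 = (p1, p2), lam2 = (q1, q2) and m = q1 - p1 = s_1(lam1 - lam2)(h_1), so m \<ge> 1
  and a \<le> m.  The proof rests on two facts about T(lam)^nu_mu, valid for arbitrary weights:

  (1) the entry s11 is the same for all tuples of T(lam)^nu_mu: the two weight equations,
      together with the two sum constraints of T(lam), force
      3 s11 = 2 nu(h_1) + nu(h_2) - 2 mu(h_1) - mu(h_2) + lam(h_1) + 2 lam(h_2);
  (2) for any two tuples s, t of T(lam)^nu_mu one has s13 + (t11 - t22) \<ge> lam(h_1) - mu(h_1),
      because t11 = s11 by (1), s11 + s13 \<ge> lam(h_1) + lam(h_2) - mu(h_1) as s12 \<le> mu(h_1),
      and t22 \<le> lam(h_2).

  The theorem follows by choosing l = min (s11 - s22) over T(lam2)^nu_lam1 (l = 0 if the set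
  is empty): the first inequality holds by minimality, and the second is (2) with t a minimiser,
  since a \<le> m.
\<close>

lemma Tnu_s11_determined:
  assumes "(s11, s12, s13, s22, s23) \<in> Tnu lam mu nu"
  shows "3 * s11 = 2 * fst nu + snd nu - 2 * fst mu - snd mu + fst lam + 2 * snd lam"
  using assms by (simp add: Tnu_def Tset_def)

lemma Tnu_cross_bound:
  assumes s: "(s11, s12, s13, s22, s23) \<in> Tnu lam mu nu"
    and t: "(t11, t12, t13, t22, t23) \<in> Tnu lam mu nu"
  shows "s13 + (t11 - t22) \<ge> fst lam - fst mu"
proof -
  have "t11 = s11"
    using Tnu_s11_determined[OF s] Tnu_s11_determined[OF t] by linarith
  moreover have "s11 + s13 \<ge> fst lam + snd lam - fst mu"
    using s by (simp add: Tnu_def Tset_def)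
  moreover have "t22 \<le> snd lam"
    using t by (simp add: Tnu_def Tset_def)
  ultimately show ?thesis by linarith
qed

lemma Tnu_s22_le_s11:
  assumes "(s11, s12, s13, s22, s23) \<in> Tnu lam mu nu"
  shows "s22 \<le> s11"
  using assms by (simp add: Tnu_def Tset_def)

lemma Tnu_min_gap:
  assumes "Tnu lam mu nu \<noteq> {}"
  obtains t11 t12 t13 t22 t23 where "(t11, t12, t13, t22, t23) \<in> Tnu lam mu nu"
    and "\<And>s11 s12 s13 s22 s23. (s11, s12, s13, s22, s23) \<in> Tnu lam mu nu \<Longrightarrow>
           t11 - t22 \<le> s11 - s22"
proof -
  define gap :: "tup \<Rightarrow> nat" where "gap = (\<lambda>(s11, s12, s13, s22, s23). nat (s11 - s22))"
  obtain u where "u \<in> Tnu lam mu nu" using assms by blast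
  then obtain t where t: "t \<in> Tnu lam mu nu"
    and min: "\<And>s. s \<in> Tnu lam mu nu \<Longrightarrow> gap t \<le> gap s"
    using ex_has_least_nat[of "\<lambda>x. x \<in> Tnu lam mu nu" u gap] by blast
  obtain t11 t12 t13 t22 t23 where t_def: "t = (t11, t12, t13, t22, t23)"
    by (cases t) auto
  show ?thesis
  proof (rule that)
    show "(t11, t12, t13, t22, t23) \<in> Tnu lam mu nu" using t t_def by simp
    fix s11 s12 s13 s22 s23
    assume s: "(s11, s12, s13, s22, s23) \<in> Tnu lam mu nu"
    have "nat (t11 - t22) \<le> nat (s11 - s22)"
      using min[OF s] by (simp add: gap_def t_def)
    then show "t11 - t22 \<le> s11 - s22"
      using Tnu_s22_le_s11[OF s] by linarith
  qed
qed

theorem proposition6p5: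
  fixes lam1 lam2 :: weight and a :: int
  assumes "dominant lam1" and "dominant lam2"
    and "dominant (s1 (wminus lam1 lam2))"
    and "fst (s1 (wminus lam1 lam2)) > 0"
    and "a \<in> {1, fst (s1 (wminus lam1 lam2))}"
  shows "\<forall>nu. dominant nu \<longrightarrow>
           (\<exists>l::int. l \<ge> 0 \<and>
              (\<forall>s11 s12 s13 s22 s23. (s11, s12, s13, s22, s23) \<in> Tnu lam2 lam1 nu \<longrightarrow>
                  s11 \<ge> s22 + l \<and> s13 \<ge> a - l))"
proof (intro allI impI)
  fix nu :: weight
  have a_le: "a \<le> fst lam2 - fst lam1"
    using assms(4,5) by (auto simp: s1_def wminus_def)
  show "\<exists>l::int. l \<ge> 0 \<and>
          (\<forall>s11 s12 s13 s22 s23. (s11, s12, s13, s22, s23) \<in> Tnu lam2 lam1 nu \<longrightarrow>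
              s11 \<ge> s22 + l \<and> s13 \<ge> a - l)"
  proof (cases "Tnu lam2 lam1 nu = {}")
    case True
    then show ?thesis by auto
  next
    case False
    obtain t11 t12 t13 t22 t23
      where t: "(t11, t12, t13, t22, t23) \<in> Tnu lam2 lam1 nu"
        and min: "\<And>s11 s12 s13 s22 s23. (s11, s12, s13, s22, s23) \<in> Tnu lam2 lam1 nu \<Longrightarrow>
                    t11 - t22 \<le> s11 - s22"
      using Tnu_min_gap[OF False] by blast
    show ?thesis
    proof (intro exI[of _ "t11 - t22"] conjI allI impI)
      show "t11 - t22 \<ge> 0" using Tnu_s22_le_s11[OF t] by simp
      fix s11 s12 s13 s22 s23
      assume s: "(s11, s12, s13, s22, s23) \<in> Tnu lam2 lam1 nu"
      show "s11 \<ge> s22 + (t11 - t22)" using min[OF s] by simp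
      show "s13 \<ge> a - (t11 - t22)" using Tnu_cross_bound[OF s t] a_le by simp
    qed
  qed
qed

end
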